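(* Consider a sequence of total systems indexed by the size $N$ (the system S is fixed and the bath grows). For each $N$, the total Hamiltonian $H=H^{(N)}$ on the finite-dimensional space $\mathcal{H}_{\mathrm{S}}\otimes\mathcal{H}_{\mathrm{B}}^{(N)}$ has non-degenerate spectrum with eigenpairs $(E_j,|E_j\rangle)$, and the initial state is a product $\rho(0)=\rho_{\mathrm{S}}(0)\otimes\rho_{\mathrm{B}}(0)$ (depending on $N$). Fix an energy density $u$ and widths $\Delta=\Delta_N>0$ with $\Delta_N=\mathcal{O}(N^\alpha)$, $0\le\alpha<1$; let $M_{uN,\Delta}:=\{j:|E_j-uN|\le\Delta\}$ (assumed nonempty), $D^{\mathrm{mc}}:=|M_{uN,\Delta}|$, and $\rho^{\mathrm{mc}}:=\frac{1}{D^{\mathrm{mc}}}\sum_{j\in M_{uN,\Delta}}|E_j\rangle\langle E_j|$. Assume: (i) with $P_{\mathrm{out}}:=\sum_{j\notin M_{uN,\Delta}}|E_j\rangle\langle E_j|$, for every $\epsilon>0$, $\mathrm{Tr}[P_{\mathrm{out}}\rho(0)]<\epsilon$ for all sufficiently large $N$; (ii) (weak ETH) for every $\epsilon>0$ there is a constant $\gamma_\epsilon>0$ such that for every $N$, $\frac{1}{D^{\mathrm{mc}}}\bigl|\{j\in M_{uN,\Delta}:\mathcal{D}_{\mathrm{S}}(|E_j\rangle\langle E_j|,\rho^{\mathrm{mc}})>\epsilon\}\bigr|<e^{-\gamma_\epsilon N}$; (iii) (large effective dimension) for every $\epsilon,\tilde\epsilon>0$, $D_{\mathrm{eff}}>D^{\mathrm{mc}}e^{-\gamma_\epsilon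 N}/\tilde\epsilon$ for all sufficiently large $N$, with $\gamma_\epsilon$ as in (ii). Then for every $\epsilon>0$, $\mathcal{D}_{\mathrm{S}}(\omega,\rho^{\mathrm{mc}})<\epsilon$ for all sufficiently large $N$, where $\omega$ is the diagonal ensemble of $\rho(0)$.
   Context: The diagonal ensemble of $\rho(0)$ is $\omega:=\lim_{\tau\to\infty}\frac1\tau\int_0^\tau e^{-iHt}\rho(0)e^{iHt}\,dt=\sum_j|E_j\rangle\langle E_j|\rho(0)|E_j\rangle\langle E_j|$ (non-degenerate $H$). The effective dimension is $D_{\mathrm{eff}}:=1/\sum_j\langle E_j|\rho(0)|E_j\rangle^2$. For density operators $\rho,\tau$ on $\mathcal{H}_{\mathrm{S}}\otimes\mathcal{H}_{\mathrm{B}}$, the local trace distance is $\mathcal{D}_{\mathrm{S}}(\rho,\tau):=\frac12\mathrm{Tr}\bigl|\mathrm{Tr}_{\mathrm{B}}\rho-\mathrm{Tr}_{\mathrm{B}}\tau\bigr|$. *)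

theory Defs
  imports "Jordan_Normal_Form.Matrix" "Jordan_Normal_Form.Char_Poly"
    "HOL-Computational_Algebra.Polynomial" "HOL-Library.Landau_Symbols"
begin

definition cadj :: "complex mat \<Rightarrow> complex mat" where
  "cadj A = mat (dim_col A) (dim_row A) (\<lambda>(i,j). cnj (A $$ (j,i)))"

text \<open>Trace norm Tr|A| = sum of the singular values of A, i.e. of the square roots
  of the eigenvalues (with multiplicity) of A^* A.\<close>
definition trace_norm :: "complex mat \<Rightarrow> real" where
  "trace_norm A = sum_mset (image_mset (\<lambda>z. sqrt (cmod z)) (proots (char_poly (cadj A * A))))"

definition braket :: "complex vec \<Rightarrow> complex vec \<Rightarrow> complex" where
  "braket v w = (\<Sum>i<dim_vec v. cnj (v $ i) * w $ i)"

definition ketbra :: "complex vec \<Rightarrow> complex mat" where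
  "ketbra v = mat (dim_vec v) (dim_vec v) (\<lambda>(i,j). v $ i * cnj (v $ j))"

definition sum_mats :: "nat \<Rightarrow> ('i \<Rightarrow> complex mat) \<Rightarrow> 'i set \<Rightarrow> complex mat" where
  "sum_mats n f S = mat n n (\<lambda>(i,k). \<Sum>j\<in>S. f j $$ (i,k))"

definition mtrace :: "complex mat \<Rightarrow> complex" where
  "mtrace A = (\<Sum>i<dim_row A. A $$ (i,i))"

definition density :: "nat \<Rightarrow> complex mat \<Rightarrow> bool" where
  "density n A \<longleftrightarrow> A \<in> carrier_mat n n \<and> cadj A = A \<and>
     (\<forall>v \<in> carrier_vec n. 0 \<le> Re (braket v (A *\<^sub>v v))) \<and> mtrace A = 1"

text \<open>Tensor (Kronecker) product for H_S (dim dS) tensor H_B (dim dB);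
  basis index (a,b) corresponds to a * dB + b.\<close>
definition tensor :: "nat \<Rightarrow> nat \<Rightarrow> complex mat \<Rightarrow> complex mat \<Rightarrow> complex mat" where
  "tensor dS dB A B = mat (dS * dB) (dS * dB)
     (\<lambda>(i,j). A $$ (i div dB, j div dB) * B $$ (i mod dB, j mod dB))"

definition ptrace_B :: "nat \<Rightarrow> nat \<Rightarrow> complex mat \<Rightarrow> complex mat" where
  "ptrace_B dS dB R = mat dS dS (\<lambda>(a,a'). \<Sum>b<dB. R $$ (a * dB + b, a' * dB + b))"

definition local_dist :: "nat \<Rightarrow> nat \<Rightarrow> complex mat \<Rightarrow> complex mat \<Rightarrow> real" where
  "local_dist dS dB \<rho> \<tau> = trace_norm (ptrace_B dS dB \<rho> - ptrace_B dS dB \<tau>) / 2"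

end

(*
  In the energy eigenbasis the diagonal ensemble is the mixture \<Sum>_j p_j |E_j><E_j| with weights
  p_j = <E_j|\<rho>(0)|E_j>, which are non-negative (\<rho>(0) is a product of density operators) and sum
  to 1.  Hence Tr_B \<omega> - Tr_B \<rho>^mc = \<Sum>_j p_j (Tr_B |E_j><E_j| - Tr_B \<rho>^mc), and in the Frobenius
  norm, which controls the trace norm up to the factor sqrt d_S, the summands split into three
  groups: the j outside the energy window carry total weight Tr[P_out \<rho>(0)], the typical j in the
  window contribute at most 2 \<epsilon>, and the exceptional j in the window, by Cauchy-Schwarz, contribute
  at most a multiple of sqrt (#bad * \<Sum>_j p_j^2) = sqrt (#bad / D_eff), which is small by the
  weak ETH and the large effective dimension.
*)
theory Submission
  imports Defs "Jordan_Normal_Form.Schur_Decomposition" "HOL-Analysis.L2_Norm"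
begin

lemma sum_lessThan_add_index:
  fixes f :: "nat \<Rightarrow> 'a::comm_monoid_add"
  shows "(\<Sum>i<k + n. f i) = (\<Sum>i<k. f i) + (\<Sum>b<n. f (k + b))"
  by (induction n) (simp_all add: add.assoc)

lemma sum_lessThan_mult_index:
  fixes f :: "nat \<Rightarrow> 'a::comm_monoid_add"
  shows "(\<Sum>i<m * n. f i) = (\<Sum>a<m. \<Sum>b<n. f (a * n + b))"
proof (induction m)
  case (Suc m)
  have "(\<Sum>i<Suc m * n. f i) = (\<Sum>i<m * n + n. f i)" by (simp add: add.commute)
  with Suc show ?case by (simp add: sum_lessThan_add_index)
qed simp

lemma index_pair_less:
  assumes "a < m" "b < n"
  shows "a * n + b < m * (n::nat)"
proof -
  have "a * n + b < Suc a * n" using assms(2) by simp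
  also have "\<dots> \<le> m * n" using assms(1) by (intro mult_right_mono) auto
  finally show ?thesis .
qed

lemma cnj_mult_self: "cnj z * z = complex_of_real ((cmod z)\<^sup>2)"
  by (metis complex_norm_square mult.commute of_real_power)

lemma index_mult_mat_sum:
  assumes "A \<in> carrier_mat n m" "B \<in> carrier_mat m l" "i < n" "j < l"
  shows "(A * B) $$ (i,j) = (\<Sum>k<m. A $$ (i,k) * B $$ (k,j))"
  using assms by (auto simp: scalar_prod_def atLeast0LessThan intro!: sum.cong)

lemma index_mult_mat_vec_sum:
  assumes "A \<in> carrier_mat n m" "w \<in> carrier_vec m" "i < n"
  shows "(A *\<^sub>v w) $ i = (\<Sum>j<m. A $$ (i,j) * w $ j)"
  using assms by (auto simp: scalar_prod_def atLeast0LessThan intro!: sum.cong)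

lemma mtrace_mult_comm:
  assumes "A \<in> carrier_mat n m" "B \<in> carrier_mat m n"
  shows "mtrace (A * B) = mtrace (B * A)"
proof -
  have "mtrace (A * B) = (\<Sum>i<n. \<Sum>k<m. A $$ (i,k) * B $$ (k,i))"
    using assms unfolding mtrace_def by (auto simp: scalar_prod_def atLeast0LessThan intro!: sum.cong)
  also have "\<dots> = (\<Sum>k<m. \<Sum>i<n. B $$ (k,i) * A $$ (i,k))"
    by (subst sum.swap) (simp add: mult.commute)
  also have "\<dots> = mtrace (B * A)"
    using assms unfolding mtrace_def by (auto simp: scalar_prod_def atLeast0LessThan intro!: sum.cong)
  finally show ?thesis .
qed

lemma cadj_carrier: "X \<in> carrier_mat n m \<Longrightarrow> cadj X \<in> carrier_mat m n"
  unfolding cadj_def by auto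

lemma index_cadj: "X \<in> carrier_mat n m \<Longrightarrow> i < m \<Longrightarrow> k < n \<Longrightarrow> cadj X $$ (i,k) = cnj (X $$ (k,i))"
  unfolding cadj_def by auto

lemma index_cadj_mult:
  assumes "X \<in> carrier_mat n m" "i < m" "j < m"
  shows "(cadj X * X) $$ (i,j) = (\<Sum>k<n. cnj (X $$ (k,i)) * X $$ (k,j))"
  using assms by (simp add: index_mult_mat_sum[OF cadj_carrier] index_cadj)

lemma braket_mult_mat_vec:
  assumes "v \<in> carrier_vec n" "X \<in> carrier_mat n n"
  shows "braket v (X *\<^sub>v v) = (\<Sum>i<n. \<Sum>k<n. cnj (v $ i) * X $$ (i,k) * v $ k)"
  using assms unfolding braket_def
  by (simp add: index_mult_mat_vec_sum sum_distrib_left mult.assoc del: index_mult_mat_vec)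

lemma braket_cadj:
  assumes "X \<in> carrier_mat n m" "v \<in> carrier_vec m" "y \<in> carrier_vec n"
  shows "braket v (cadj X *\<^sub>v y) = braket (X *\<^sub>v v) y"
proof -
  have "braket v (cadj X *\<^sub>v y) = (\<Sum>i<m. \<Sum>k<n. cnj (v $ i) * cnj (X $$ (k,i)) * y $ k)"
    using assms unfolding braket_def
    by (simp add: index_mult_mat_vec_sum[OF cadj_carrier] index_cadj sum_distrib_left mult.assoc del: index_mult_mat_vec)
  also have "\<dots> = braket (X *\<^sub>v v) y"
    using assms unfolding braket_def
    by (subst sum.swap) (simp add: index_mult_mat_vec_sum sum_distrib_left sum_distrib_right mult_ac del: index_mult_mat_vec)
  finally show ?thesis .
qed

lemma braket_self: "braket w w = complex_of_real (\<Sum>i<dim_vec w. (cmod (w $ i))\<^sup>2)"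
  unfolding braket_def by (simp add: cnj_mult_self)

lemma sum_sq_norm_pos:
  assumes "w \<in> carrier_vec n" "w \<noteq> 0\<^sub>v n"
  shows "0 < (\<Sum>i<n. (cmod (w $ i))\<^sup>2)"
proof -
  obtain i where "i < n" "w $ i \<noteq> 0"
    using assms by (metis carrier_vecD eq_vecI index_zero_vec)
  then show ?thesis by (intro sum_pos2[of _ i]) auto
qed

lemma eigenvalue_cadj_mult_nonneg:
  assumes X: "X \<in> carrier_mat d d" and ev: "eigenvalue (cadj X * X) a"
  shows "a = complex_of_real (Re a) \<and> 0 \<le> Re a"
proof -
  obtain w where w: "w \<in> carrier_vec d" "w \<noteq> 0\<^sub>v d" and ew: "(cadj X * X) *\<^sub>v w = a \<cdot>\<^sub>v w"
    using ev X unfolding eigenvalue_def eigenvector_def by (auto dest: cadj_carrier)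
  define W where "W = (\<Sum>i<d. (cmod (w $ i))\<^sup>2)"
  define Y where "Y = (\<Sum>i<d. (cmod ((X *\<^sub>v w) $ i))\<^sup>2)"
  have "a * complex_of_real W = a * braket w w"
    using w by (simp add: braket_self W_def)
  also have "\<dots> = braket w (a \<cdot>\<^sub>v w)"
    unfolding braket_def by (auto simp: sum_distrib_left mult_ac intro!: sum.cong)
  also have "\<dots> = braket w ((cadj X * X) *\<^sub>v w)"
    unfolding ew ..
  also have "\<dots> = braket (X *\<^sub>v w) (X *\<^sub>v w)"
    using X w by (simp add: assoc_mult_mat_vec[OF cadj_carrier[OF X] X w(1)] braket_cadj)
  also have "\<dots> = complex_of_real Y"
    using X unfolding braket_self Y_def by simp
  finally have "a * complex_of_real W = complex_of_real Y" .
  moreover have "0 < W" unfolding W_def by (rule sum_sq_norm_pos[OF w])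
  ultimately have "a = complex_of_real (Y / W)" by (simp add: field_simps)
  moreover have "0 \<le> Y / W" unfolding Y_def W_def by (simp add: sum_nonneg)
  ultimately show ?thesis by simp
qed

section \<open>Frobenius and trace norms\<close>

definition frob_norm :: "nat \<Rightarrow> (nat \<Rightarrow> nat \<Rightarrow> complex) \<Rightarrow> real" where
  "frob_norm d f = L2_set (\<lambda>p. cmod (f (fst p) (snd p))) ({..<d} \<times> {..<d})"

lemma frob_norm_sq: "(frob_norm d f)\<^sup>2 = (\<Sum>i<d. \<Sum>k<d. (cmod (f i k))\<^sup>2)"
  unfolding frob_norm_def L2_set_def
  by (simp add: sum_nonneg sum.cartesian_product case_prod_beta)

lemma frob_norm_cong:
  "(\<And>i k. i < d \<Longrightarrow> k < d \<Longrightarrow> f i k = g i k) \<Longrightarrow> frob_norm d f = frob_norm d g"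
  unfolding frob_norm_def by (rule L2_set_cong) auto

lemma frob_norm_add_le: "frob_norm d (\<lambda>i k. f i k + g i k) \<le> frob_norm d f + frob_norm d g"
proof -
  have "frob_norm d (\<lambda>i k. f i k + g i k) \<le>
      L2_set (\<lambda>p. cmod (f (fst p) (snd p)) + cmod (g (fst p) (snd p))) ({..<d} \<times> {..<d})"
    unfolding frob_norm_def by (rule L2_set_mono) (auto intro: norm_triangle_ineq)
  also have "\<dots> \<le> frob_norm d f + frob_norm d g"
    unfolding frob_norm_def by (rule L2_set_triangle_ineq)
  finally show ?thesis .
qed

lemma frob_norm_scale: "frob_norm d (\<lambda>i k. c * f i k) = cmod c * frob_norm d f"
  unfolding frob_norm_def norm_mult by (simp add: L2_set_right_distrib)

lemma frob_norm_sum_le: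
  assumes "finite J"
  shows "frob_norm d (\<lambda>i k. \<Sum>j\<in>J. c j * g j i k) \<le> (\<Sum>j\<in>J. cmod (c j) * frob_norm d (g j))"
  using assms
proof (induction J rule: finite_induct)
  case empty
  then show ?case by (simp add: frob_norm_def L2_set_0')
next
  case (insert x J)
  then have "frob_norm d (\<lambda>i k. \<Sum>j\<in>insert x J. c j * g j i k)
      = frob_norm d (\<lambda>i k. c x * g x i k + (\<Sum>j\<in>J. c j * g j i k))"
    by simp
  also have "\<dots> \<le> frob_norm d (\<lambda>i k. c x * g x i k) + frob_norm d (\<lambda>i k. \<Sum>j\<in>J. c j * g j i k)"
    by (rule frob_norm_add_le)
  also have "\<dots> \<le> cmod (c x) * frob_norm d (g x) + (\<Sum>j\<in>J. cmod (c j) * frob_norm d (g j))"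
    using insert.IH by (intro add_mono) (simp_all add: frob_norm_scale)
  finally show ?case using insert by simp
qed

lemma frob_norm_le_const:
  assumes "\<And>i k. i < d \<Longrightarrow> k < d \<Longrightarrow> cmod (f i k) \<le> B"
  shows "frob_norm d f \<le> real (d * d) * B"
proof -
  have "frob_norm d f \<le> (\<Sum>p\<in>{..<d} \<times> {..<d}. \<bar>cmod (f (fst p) (snd p))\<bar>)"
    unfolding frob_norm_def by (rule L2_set_le_sum_abs)
  also have "\<dots> \<le> (\<Sum>p\<in>{..<d} \<times> {..<d}. B)"
    by (rule sum_mono) (use assms in auto)
  finally show ?thesis by simp
qed

lemma proots_prod_linear_factors: "proots (\<Prod>a\<leftarrow>as. [:- a, 1:]) = mset (as :: complex list)"
proof (induction as)
  case (Cons a as)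
  have "(\<Prod>a\<leftarrow>as. [:- a, 1:]) \<noteq> (0::complex poly)"
    by (auto simp: prod_list_zero_iff)
  then have "proots ([:- a, 1:] * (\<Prod>a\<leftarrow>as. [:- a, 1:]))
      = proots [:- a, 1:] + proots (\<Prod>a\<leftarrow>as. [:- a, 1:])"
    by (intro proots_mult) auto
  with Cons show ?case using proots_linear_factor[of "-a"] by simp
qed simp

lemma mtrace_eq_sum_eigenvalues:
  assumes A: "A \<in> carrier_mat d d" and cp: "char_poly A = (\<Prod>a\<leftarrow>as. [:- a, 1:])"
  shows "mtrace A = sum_list (as :: complex list)"
proof -
  obtain B P Q where "schur_decomposition A as = (B, P, Q)"
    by (cases "schur_decomposition A as") auto
  from schur_decomposition[OF A cp this]
  have "similar_mat_wit A B P Q" and diag: "diag_mat B = as" by auto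
  then have P: "P \<in> carrier_mat d d" and Q: "Q \<in> carrier_mat d d" and B: "B \<in> carrier_mat d d"
    and QP: "Q * P = 1\<^sub>m d" and A_eq: "A = P * B * Q"
    using A unfolding similar_mat_wit_def Let_def by auto
  have "mtrace A = mtrace (Q * (P * B))"
    unfolding A_eq by (rule mtrace_mult_comm[of _ d d]) (use P B Q in auto)
  also have "Q * (P * B) = B" using P Q B QP by (simp add: assoc_mult_mat[symmetric])
  finally show ?thesis
    using B unfolding mtrace_def diag[symmetric] diag_mat_def by (simp add: sum_list_sum_nth atLeast0LessThan)
qed

lemma mtrace_cadj_mult:
  assumes X: "X \<in> carrier_mat d d"
  shows "mtrace (cadj X * X) = complex_of_real ((frob_norm d (\<lambda>i k. X $$ (i,k)))\<^sup>2)"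
proof -
  have "mtrace (cadj X * X) = (\<Sum>i<d. \<Sum>k<d. cnj (X $$ (k,i)) * X $$ (k,i))"
    using X cadj_carrier[OF X] unfolding mtrace_def
    by (intro sum.cong) (auto simp: index_cadj_mult[OF X] simp del: index_mult_mat(1))
  also have "\<dots> = complex_of_real ((frob_norm d (\<lambda>i k. X $$ (i,k)))\<^sup>2)"
    unfolding frob_norm_sq by (subst sum.swap) (simp add: cnj_mult_self)
  finally show ?thesis .
qed

text \<open>The trace norm is the sum of the square roots of the eigenvalues \<open>s l\<close> of \<open>X\<^sup>* X\<close>,
  whereas their sum \<open>tr (X\<^sup>* X)\<close> is the squared Frobenius norm: the two norms are the
  \<open>\<ell>\<^sup>1\<close> and \<open>\<ell>\<^sup>2\<close> norms of the vector of the \<open>sqrt (s l)\<close>.\<close>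
lemma trace_norm_frob_norm_bounds:
  assumes X: "X \<in> carrier_mat d d"
  shows "frob_norm d (\<lambda>i k. X $$ (i,k)) \<le> trace_norm X"
    and "trace_norm X \<le> sqrt (real d) * frob_norm d (\<lambda>i k. X $$ (i,k))"
proof -
  let ?B = "cadj X * X"
  have B: "?B \<in> carrier_mat d d" using X by (metis mult_carrier_mat cadj_carrier)
  obtain as where cp: "char_poly ?B = (\<Prod>a\<leftarrow>as. [:- a, 1:])" and len: "length as = d"
    using char_poly_factorized[OF B] by blast
  define s where "s l = cmod (as ! l)" for l
  have as_real: "as ! l = complex_of_real (s l)" if "l < d" for l
  proof -
    have "poly (char_poly ?B) (as ! l) = 0"
      using that len unfolding cp poly_prod_list by (auto simp: prod_list_zero_iff)
    then have "eigenvalue ?B (as ! l)" using eigenvalue_root_char_poly[OF B] by simp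
    then show ?thesis
      using eigenvalue_cadj_mult_nonneg[OF X] unfolding s_def by (metis abs_of_nonneg norm_of_real)
  qed
  have tn: "trace_norm X = (\<Sum>l<d. sqrt (s l))"
    unfolding trace_norm_def cp proots_prod_linear_factors s_def
    by (simp add: sum_mset_sum_list sum_list_sum_nth len atLeast0LessThan flip: mset_map)
  have "complex_of_real (\<Sum>l<d. s l) = sum_list as"
    using as_real len by (simp add: sum_list_sum_nth atLeast0LessThan)
  also have "\<dots> = complex_of_real ((frob_norm d (\<lambda>i k. X $$ (i,k)))\<^sup>2)"
    using mtrace_eq_sum_eigenvalues[OF B cp] mtrace_cadj_mult[OF X] by simp
  finally have "(\<Sum>l<d. s l) = (frob_norm d (\<lambda>i k. X $$ (i,k)))\<^sup>2"
    using of_real_eq_iff by blast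
  moreover have "0 \<le> frob_norm d (\<lambda>i k. X $$ (i,k))"
    unfolding frob_norm_def by (rule L2_set_nonneg)
  ultimately have "frob_norm d (\<lambda>i k. X $$ (i,k)) = sqrt (\<Sum>l<d. s l)"
    by simp
  also have "\<dots> = L2_set (\<lambda>l. sqrt (s l)) {..<d}"
    unfolding L2_set_def s_def by simp
  finally have fr: "frob_norm d (\<lambda>i k. X $$ (i,k)) = L2_set (\<lambda>l. sqrt (s l)) {..<d}" .
  show "frob_norm d (\<lambda>i k. X $$ (i,k)) \<le> trace_norm X"
    unfolding tn fr by (rule L2_set_le_sum) (simp add: s_def)
  have "(\<Sum>l<d. \<bar>sqrt (s l)\<bar> * \<bar>1\<bar>) \<le> L2_set (\<lambda>l. sqrt (s l)) {..<d} * L2_set (\<lambda>l. 1) {..<d}"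
    by (rule L2_set_mult_ineq)
  then show "trace_norm X \<le> sqrt (real d) * frob_norm d (\<lambda>i k. X $$ (i,k))"
    unfolding tn fr L2_set_constant by (simp add: s_def mult.commute)
qed

section \<open>Gram decomposition of positive semidefinite forms\<close>

text \<open>Matrices are taken as index functions here, so that the elimination below needs no
  dimension bookkeeping.\<close>
definition qform :: "nat \<Rightarrow> (nat \<Rightarrow> nat \<Rightarrow> complex) \<Rightarrow> (nat \<Rightarrow> complex) \<Rightarrow> complex" where
  "qform n A x = (\<Sum>i<n. \<Sum>j<n. cnj (x i) * A i j * x j)"

definition hermitian_on :: "nat \<Rightarrow> (nat \<Rightarrow> nat \<Rightarrow> complex) \<Rightarrow> bool" where
  "hermitian_on n A \<longleftrightarrow> (\<forall>i<n. \<forall>j<n. A j i = cnj (A i j))"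

definition psd_on :: "nat \<Rightarrow> (nat \<Rightarrow> nat \<Rightarrow> complex) \<Rightarrow> bool" where
  "psd_on n A \<longleftrightarrow> hermitian_on n A \<and> (\<forall>x. 0 \<le> Re (qform n A x))"

lemma hermitian_onD: "hermitian_on n A \<Longrightarrow> i < n \<Longrightarrow> j < n \<Longrightarrow> A j i = cnj (A i j)"
  unfolding hermitian_on_def by blast

lemma qform_real:
  assumes "hermitian_on n A"
  shows "cnj (qform n A x) = qform n A x"
proof -
  have "cnj (qform n A x) = (\<Sum>i<n. \<Sum>j<n. x i * A j i * cnj (x j))"
    unfolding qform_def cnj_sum
  proof (intro sum.cong refl)
    fix i j assume "i \<in> {..<n}" "j \<in> {..<n}"
    then have "A j i = cnj (A i j)" by (intro hermitian_onD[OF assms]) auto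
    then show "cnj (cnj (x i) * A i j * x j) = x i * A j i * cnj (x j)" by simp
  qed
  also have "\<dots> = qform n A x"
    unfolding qform_def by (subst sum.swap) (simp add: mult_ac)
  finally show ?thesis .
qed

lemma qform_column_sum:
  assumes "hermitian_on n A" "c < n"
  shows "(\<Sum>i<n. cnj (x i) * A i c) = cnj (\<Sum>j<n. A c j * x j)"
  unfolding cnj_sum
proof (rule sum.cong[OF refl])
  fix i assume "i \<in> {..<n}"
  then have "A i c = cnj (A c i)" by (intro hermitian_onD[OF assms]) auto
  then show "cnj (x i) * A i c = cnj (A c i * x i)" by simp
qed

lemma qform_unit: "j < n \<Longrightarrow> qform n A (\<lambda>i. if i = j then 1 else 0) = A j j"
  unfolding qform_def
  by (simp add: if_distrib[of cnj] if_distrib[of "\<lambda>z. z * _"] if_distrib[of "\<lambda>z. _ * z"] cong: if_cong)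

lemma qform_shift:
  fixes x :: "nat \<Rightarrow> complex"
  assumes c: "c < n" and herm: "hermitian_on n A"
  defines "b \<equiv> (\<Sum>j<n. A c j * x j)"
  shows "qform n A (\<lambda>i. x i + (if i = c then s else 0)) =
    qform n A x + s * cnj b + cnj s * b + cnj s * s * A c c"
proof -
  have col: "(\<Sum>i<n. cnj (x i) * A i c) = cnj b"
    unfolding b_def by (rule qform_column_sum[OF herm c])
  have "cnj (x i + (if i = c then s else 0)) * A i j * (x j + (if j = c then s else 0)) =
     cnj (x i) * A i j * x j + (if j = c then cnj (x i) * A i c * s else 0)
     + (if i = c then cnj s * A c j * x j else 0) + (if i = c \<and> j = c then cnj s * s * A c c else 0)" for i j
    by (auto simp: algebra_simps)
  moreover have "(\<Sum>j\<in>J. if P then f j else 0) = (if P then (\<Sum>j\<in>J. f j) else (0::complex))"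
    for P J and f :: "nat \<Rightarrow> complex" by simp
  moreover have "(if P \<and> Q then z else 0) = (if P then if Q then z else 0 else (0::complex))"
    for P Q z by simp
  ultimately have "qform n A (\<lambda>i. x i + (if i = c then s else 0)) =
      qform n A x + (\<Sum>i<n. cnj (x i) * A i c * s) + (\<Sum>j<n. cnj s * A c j * x j) + cnj s * s * A c c"
    unfolding qform_def using c by (simp add: sum.distrib)
  also have "(\<Sum>i<n. cnj (x i) * A i c * s) = (\<Sum>i<n. cnj (x i) * A i c) * s"
    by (rule sum_distrib_right[symmetric])
  also have "(\<Sum>j<n. cnj s * A c j * x j) = cnj s * b"
    unfolding b_def by (simp add: sum_distrib_left mult.assoc)
  finally show ?thesis unfolding col by (simp add: mult.commute)
qed

lemma psd_on_diag:
  assumes "psd_on n A" "c < n"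
  shows "A c c = complex_of_real (Re (A c c)) \<and> 0 \<le> Re (A c c)"
proof -
  have "A c c = cnj (A c c)" using assms unfolding psd_on_def hermitian_on_def by blast
  then have "Im (A c c) = 0" by (metis Reals_cnj_iff complex_is_Real_iff)
  moreover have "0 \<le> Re (A c c)" using assms qform_unit[of c n A] unfolding psd_on_def by metis
  ultimately show ?thesis by (simp add: complex_eq_iff)
qed

text \<open>Shifting \<open>x\<close> along the \<open>c\<close>-th unit vector by a suitable multiple of \<open>A c j\<close> makes the
  quadratic form negative unless \<open>A c j = 0\<close>.\<close>
lemma psd_on_row_zero:
  assumes psd: "psd_on n A" and c: "c < n" and zero: "A c c = 0" and j: "j < n"
  shows "A c j = 0"
proof (rule ccontr)
  assume nz: "A c j \<noteq> 0"
  have herm: "hermitian_on n A" using psd unfolding psd_on_def by auto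
  define x where "x = (\<lambda>i. if i = j then 1 else (0::complex))"
  define t where "t = (\<bar>Re (A j j)\<bar> + 1) / (2 * (cmod (A c j))\<^sup>2)"
  define s where "s = - complex_of_real t * A c j"
  have b: "(\<Sum>k<n. A c k * x k) = A c j"
    unfolding x_def using j by (simp add: if_distrib[of "\<lambda>z. _ * z"] cong: if_cong)
  have "A c j * cnj (A c j) = (complex_of_real (cmod (A c j)))\<^sup>2"
    by (metis complex_norm_square of_real_power)
  then have "s * cnj (A c j) + cnj s * A c j = - complex_of_real (2 * t * (cmod (A c j))\<^sup>2)"
    unfolding s_def by (simp add: algebra_simps)
  also have "2 * t * (cmod (A c j))\<^sup>2 = \<bar>Re (A j j)\<bar> + 1" unfolding t_def using nz by simp
  finally have shift: "s * cnj (A c j) + cnj s * A c j = - complex_of_real (\<bar>Re (A j j)\<bar> + 1)" .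
  have "qform n A (\<lambda>i. x i + (if i = c then s else 0)) = A j j + (s * cnj (A c j) + cnj s * A c j)"
    using qform_shift[OF c herm, of x s] qform_unit[OF j, of A] unfolding b zero x_def[symmetric]
    by (simp add: add.assoc)
  then have "Re (qform n A (\<lambda>i. x i + (if i = c then s else 0))) = Re (A j j) - (\<bar>Re (A j j)\<bar> + 1)"
    unfolding shift by simp
  moreover have "0 \<le> Re (qform n A (\<lambda>i. x i + (if i = c then s else 0)))" using psd unfolding psd_on_def by auto
  ultimately show False by linarith
qed

lemma psd_on_schur_complement:
  assumes psd: "psd_on n A" and c: "c < n" and nz: "A c c \<noteq> 0"
  shows "psd_on n (\<lambda>i j. A i j - A i c * A c j / A c c)"
proof -
  have herm: "hermitian_on n A" using psd unfolding psd_on_def by auto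
  define a where "a = Re (A c c)"
  have Acc: "A c c = complex_of_real a" and "0 < a"
    using psd_on_diag[OF psd c] nz unfolding a_def by (auto simp: order_le_less)
  have "hermitian_on n (\<lambda>i j. A i j - A i c * A c j / A c c)"
    unfolding hermitian_on_def
  proof (intro allI impI)
    fix i j assume i: "i < n" and j: "j < n"
    have "A j i = cnj (A i j)" "A j c = cnj (A c j)" "A c i = cnj (A i c)"
      using hermitian_onD[OF herm i j] hermitian_onD[OF herm c j] hermitian_onD[OF herm i c] .
    then show "A j i - A j c * A c i / A c c = cnj (A i j - A i c * A c j / A c c)"
      using Acc by (simp add: mult.commute)
  qed
  moreover have "0 \<le> Re (qform n (\<lambda>i j. A i j - A i c * A c j / A c c) x)" for x
  proof -
    define b where "b = (\<Sum>j<n. A c j * x j)"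
    define s where "s = - b / A c c"
    have col: "(\<Sum>i<n. cnj (x i) * A i c) = cnj b"
      unfolding b_def by (rule qform_column_sum[OF herm c])
    have "cnj (x i) * (A i j - A i c * A c j / A c c) * x j
        = cnj (x i) * A i j * x j - cnj (x i) * A i c * (A c j * x j) / A c c" for i j
      using nz by (simp add: field_simps)
    then have "qform n (\<lambda>i j. A i j - A i c * A c j / A c c) x
        = qform n A x - (\<Sum>i<n. \<Sum>j<n. cnj (x i) * A i c * (A c j * x j)) / A c c"
      unfolding qform_def by (simp add: sum_subtractf sum_divide_distrib)
    also have "(\<Sum>i<n. \<Sum>j<n. cnj (x i) * A i c * (A c j * x j)) = (\<Sum>i<n. cnj (x i) * A i c) * b"
      unfolding b_def by (rule sum_product[symmetric])
    also have "\<dots> = cnj b * b" unfolding col ..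
    also have "qform n A x - cnj b * b / A c c = qform n A (\<lambda>i. x i + (if i = c then s else 0))"
      unfolding qform_shift[OF c herm] col b_def[symmetric] s_def Acc using \<open>0 < a\<close>
      by (simp add: field_simps)
    finally show ?thesis using psd unfolding psd_on_def by simp
  qed
  ultimately show ?thesis unfolding psd_on_def by blast
qed

lemma psd_on_eliminate_row:
  assumes psd: "psd_on n A" and c: "c < n"
    and zero: "\<forall>i<n. \<forall>j<n. (i < c \<or> j < c) \<longrightarrow> A i j = 0"
  shows "\<exists>w A'. psd_on n A' \<and> (\<forall>i<n. \<forall>j<n. (i < Suc c \<or> j < Suc c) \<longrightarrow> A' i j = 0)
    \<and> (\<forall>i<n. \<forall>j<n. A i j = A' i j + w i * cnj (w j))"
proof (cases "A c c = 0")
  case True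
  have herm: "hermitian_on n A" using psd unfolding psd_on_def by auto
  have "A c j = 0" "A j c = 0" if "j < n" for j
    using psd_on_row_zero[OF psd c True that] hermitian_onD[OF herm c that] by auto
  then have "\<forall>i<n. \<forall>j<n. (i < Suc c \<or> j < Suc c) \<longrightarrow> A i j = 0"
    using zero by (metis less_Suc_eq)
  then show ?thesis using psd by (intro exI[of _ "\<lambda>_. 0"] exI[of _ A]) simp
next
  case False
  have herm: "hermitian_on n A" using psd unfolding psd_on_def by auto
  define A' where "A' i j = A i j - A i c * A c j / A c c" for i j
  define a where "a = Re (A c c)"
  define w where "w i = A i c / complex_of_real (sqrt a)" for i
  have "A c c = complex_of_real a" "0 < a"
    using psd_on_diag[OF psd c] False unfolding a_def by (auto simp: order_le_less)
  then have root: "complex_of_real (sqrt a) * complex_of_real (sqrt a) = A c c"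
    by (simp flip: of_real_mult)
  have "A i j = A' i j + w i * cnj (w j)" if "i < n" "j < n" for i j
  proof -
    have "cnj (A j c) = A c j" using hermitian_onD[OF herm that(2) c] by simp
    then have "w i * cnj (w j) = A i c * A c j / A c c"
      unfolding w_def root[symmetric] by simp
    then show ?thesis unfolding A'_def by simp
  qed
  moreover have "A' i j = 0" if ij: "i < n" "j < n" "i < Suc c \<or> j < Suc c" for i j
  proof -
    consider "i = c" | "j = c" | "i < c" | "j < c" using ij(3) by (auto simp: less_Suc_eq)
    then show ?thesis
    proof cases
      case 3
      then have "A i j = 0" "A i c = 0" using zero ij(1,2) c by blast+
      then show ?thesis unfolding A'_def by simp
    next
      case 4
      then have "A i j = 0" "A c j = 0" using zero ij(1,2) c by blast+
      then show ?thesis unfolding A'_def by simp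
    qed (use False in \<open>simp_all add: A'_def\<close>)
  qed
  moreover have "psd_on n A'" unfolding A'_def by (rule psd_on_schur_complement[OF psd c False])
  ultimately show ?thesis by blast
qed

lemma psd_on_gram_from:
  assumes "psd_on n A" "\<forall>i<n. \<forall>j<n. (i < c \<or> j < c) \<longrightarrow> A i j = 0"
  shows "\<exists>(m::nat) W. \<forall>i<n. \<forall>j<n. A i j = (\<Sum>l<m. W l i * cnj (W l j))"
  using assms
proof (induction "n - c" arbitrary: c A)
  case 0
  then have "\<forall>i<n. \<forall>j<n. A i j = (\<Sum>l<0::nat. W l i * cnj (W l j))" for W by auto
  then show ?case by blast
next
  case (Suc k)
  then have c: "c < n" and k: "k = n - Suc c" by auto
  obtain w A' where A': "psd_on n A'" "\<forall>i<n. \<forall>j<n. (i < Suc c \<or> j < Suc c) \<longrightarrow> A' i j = 0"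
    and A_eq: "\<forall>i<n. \<forall>j<n. A i j = A' i j + w i * cnj (w j)"
    using psd_on_eliminate_row[OF Suc.prems(1) c Suc.prems(2)] by blast
  obtain m :: nat and W where "\<forall>i<n. \<forall>j<n. A' i j = (\<Sum>l<m. W l i * cnj (W l j))"
    using Suc.hyps(1)[OF k A'] by blast
  then have "\<forall>i<n. \<forall>j<n. A i j = (\<Sum>l<Suc m. (W(m := w)) l i * cnj ((W(m := w)) l j))"
    using A_eq by simp
  then show ?case by blast
qed

lemma psd_on_gram:
  assumes "psd_on n A"
  shows "\<exists>(m::nat) W. \<forall>i<n. \<forall>j<n. A i j = (\<Sum>l<m. W l i * cnj (W l j))"
  using psd_on_gram_from[OF assms, of 0] by simp

section \<open>Orthonormal bases, tensor products and partial traces\<close>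

lemma orthonormal_completeness:
  fixes v :: "nat \<Rightarrow> complex vec"
  assumes vc: "\<And>j. j < n \<Longrightarrow> v j \<in> carrier_vec n"
    and on: "\<And>j k. j < n \<Longrightarrow> k < n \<Longrightarrow> braket (v j) (v k) = (if j = k then 1 else 0)"
    and i: "i < n" and k: "k < n"
  shows "(\<Sum>j<n. v j $ k * cnj (v j $ i)) = (if k = i then 1 else 0)"
proof -
  define V where "V = mat n n (\<lambda>(i,j). v j $ i)"
  have V: "V \<in> carrier_mat n n" unfolding V_def by simp
  have "cadj V * V = 1\<^sub>m n"
  proof (rule eq_matI)
    fix j l assume jl: "j < dim_row (1\<^sub>m n)" "l < dim_col (1\<^sub>m n)"
    then have "(cadj V * V) $$ (j,l) = braket (v j) (v l)"
      unfolding braket_def index_cadj_mult[OF V jl[simplified]]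
      using vc[of j] vc[of l] by (auto simp: V_def intro!: sum.cong)
    then show "(cadj V * V) $$ (j,l) = 1\<^sub>m n $$ (j,l)" using on jl by simp
  qed (use V cadj_carrier[OF V] in auto)
  then have "V * cadj V = 1\<^sub>m n"
    using mat_mult_left_right_inverse[OF cadj_carrier[OF V] V] by blast
  moreover have "(V * cadj V) $$ (k,i) = (\<Sum>j<n. v j $ k * cnj (v j $ i))"
    using i k V cadj_carrier[OF V] unfolding V_def cadj_def
    by (auto simp: scalar_prod_def atLeast0LessThan intro!: sum.cong)
  ultimately show ?thesis using i k by simp
qed

lemma sum_braket_orthonormal_eq_mtrace:
  fixes v :: "nat \<Rightarrow> complex vec"
  assumes vc: "\<And>j. j < n \<Longrightarrow> v j \<in> carrier_vec n"
    and on: "\<And>j k. j < n \<Longrightarrow> k < n \<Longrightarrow> braket (v j) (v k) = (if j = k then 1 else 0)"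
    and X: "X \<in> carrier_mat n n"
  shows "(\<Sum>j<n. braket (v j) (X *\<^sub>v v j)) = mtrace X"
proof -
  have "(\<Sum>j<n. braket (v j) (X *\<^sub>v v j)) = (\<Sum>j<n. \<Sum>i<n. \<Sum>k<n. X $$ (i,k) * (v j $ k * cnj (v j $ i)))"
    by (intro sum.cong refl) (simp add: braket_mult_mat_vec[OF vc X] mult_ac)
  also have "\<dots> = (\<Sum>i<n. \<Sum>j<n. \<Sum>k<n. X $$ (i,k) * (v j $ k * cnj (v j $ i)))"
    by (rule sum.swap)
  also have "\<dots> = (\<Sum>i<n. \<Sum>k<n. X $$ (i,k) * (\<Sum>j<n. v j $ k * cnj (v j $ i)))"
    by (rule sum.cong[OF refl], subst sum.swap) (simp add: sum_distrib_left)
  also have "\<dots> = mtrace X"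
    using X unfolding mtrace_def
    by (simp add: orthonormal_completeness[OF vc on] if_distrib[of "\<lambda>z. _ * z"] cong: if_cong)
  finally show ?thesis .
qed

lemma sum_mats_carrier: "sum_mats n f J \<in> carrier_mat n n"
  unfolding sum_mats_def by simp

lemma index_sum_mats: "i < n \<Longrightarrow> k < n \<Longrightarrow> sum_mats n f J $$ (i,k) = (\<Sum>j\<in>J. f j $$ (i,k))"
  unfolding sum_mats_def by simp

lemma ketbra_carrier: "v \<in> carrier_vec n \<Longrightarrow> ketbra v \<in> carrier_mat n n"
  unfolding ketbra_def by auto

lemma index_ketbra: "v \<in> carrier_vec n \<Longrightarrow> i < n \<Longrightarrow> k < n \<Longrightarrow> ketbra v $$ (i,k) = v $ i * cnj (v $ k)"
  unfolding ketbra_def by auto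

lemma mtrace_sum_ketbra_mult:
  fixes v :: "nat \<Rightarrow> complex vec"
  assumes vc: "\<And>j. j \<in> J \<Longrightarrow> v j \<in> carrier_vec n" and X: "X \<in> carrier_mat n n"
  shows "mtrace (sum_mats n (\<lambda>j. ketbra (v j)) J * X) = (\<Sum>j\<in>J. braket (v j) (X *\<^sub>v v j))"
proof -
  have "mtrace (sum_mats n (\<lambda>j. ketbra (v j)) J * X)
      = (\<Sum>i<n. \<Sum>k<n. \<Sum>j\<in>J. v j $ i * cnj (v j $ k) * X $$ (k,i))"
    unfolding mtrace_def using vc X sum_mats_carrier[of n "\<lambda>j. ketbra (v j)" J]
    by (auto simp: index_mult_mat_sum[OF sum_mats_carrier X] index_sum_mats index_ketbra[OF vc]
        sum_distrib_right index_mult_mat(2) intro!: sum.cong simp del: index_mult_mat(1))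
  also have "\<dots> = (\<Sum>i<n. \<Sum>j\<in>J. \<Sum>k<n. v j $ i * cnj (v j $ k) * X $$ (k,i))"
    by (rule sum.cong[OF refl]) (rule sum.swap)
  also have "\<dots> = (\<Sum>j\<in>J. \<Sum>i<n. \<Sum>k<n. v j $ i * cnj (v j $ k) * X $$ (k,i))"
    by (rule sum.swap)
  also have "\<dots> = (\<Sum>j\<in>J. \<Sum>k<n. \<Sum>i<n. cnj (v j $ k) * X $$ (k,i) * v j $ i)"
    by (rule sum.cong[OF refl], subst sum.swap) (simp add: mult_ac)
  also have "\<dots> = (\<Sum>j\<in>J. braket (v j) (X *\<^sub>v v j))"
    by (rule sum.cong[OF refl]) (simp add: braket_mult_mat_vec[OF vc X])
  finally show ?thesis .
qed

lemma tensor_carrier: "tensor dS dB A B \<in> carrier_mat (dS * dB) (dS * dB)"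
  unfolding tensor_def by simp

lemma index_tensor:
  assumes "a < dS" "b < dB" "a' < dS" "b' < dB"
  shows "tensor dS dB A B $$ (a * dB + b, a' * dB + b') = A $$ (a,a') * B $$ (b,b')"
  using assms unfolding tensor_def by (simp add: index_pair_less)

lemma mtrace_tensor:
  assumes "A \<in> carrier_mat dS dS" "B \<in> carrier_mat dB dB"
  shows "mtrace (tensor dS dB A B) = mtrace A * mtrace B"
  using assms unfolding mtrace_def
  by (simp add: tensor_carrier[THEN carrier_matD(1)] sum_lessThan_mult_index index_tensor sum_product)

lemma braket_tensor:
  assumes "v \<in> carrier_vec (dS * dB)"
  shows "braket v (tensor dS dB A B *\<^sub>v v) = (\<Sum>a<dS. \<Sum>b<dB. \<Sum>a'<dS. \<Sum>b'<dB.
    cnj (v $ (a * dB + b)) * (A $$ (a,a') * B $$ (b,b')) * v $ (a' * dB + b'))"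
  unfolding braket_mult_mat_vec[OF assms tensor_carrier] sum_lessThan_mult_index
  by (simp add: index_tensor)

lemma density_carrier: "density d X \<Longrightarrow> X \<in> carrier_mat d d"
  unfolding density_def by auto

lemma density_psd_on:
  assumes "density d X"
  shows "psd_on d (\<lambda>i j. X $$ (i,j))"
proof -
  have X: "X \<in> carrier_mat d d" and "cadj X = X"
    and pos: "\<And>v. v \<in> carrier_vec d \<Longrightarrow> 0 \<le> Re (braket v (X *\<^sub>v v))"
    using assms unfolding density_def by auto
  then have "hermitian_on d (\<lambda>i j. X $$ (i,j))"
    unfolding hermitian_on_def by (metis index_cadj)
  moreover have "0 \<le> Re (qform d (\<lambda>i j. X $$ (i,j)) x)" for x
  proof -
    have "braket (vec d x) (X *\<^sub>v vec d x) = qform d (\<lambda>i j. X $$ (i,j)) x"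
      unfolding braket_mult_mat_vec[OF vec_carrier X] qform_def by (auto intro!: sum.cong)
    then show ?thesis using pos[OF vec_carrier] by metis
  qed
  ultimately show ?thesis unfolding psd_on_def by auto
qed

text \<open>Writing \<open>\<rho>\<^sub>S = \<Sum>\<^sub>l w\<^sub>l w\<^sub>l\<^sup>*\<close>, the expectation in \<open>\<rho>\<^sub>S \<otimes> \<rho>\<^sub>B\<close> becomes a sum of
  expectations in \<open>\<rho>\<^sub>B\<close> of the partial inner products \<open>y\<^sub>l = \<langle>w\<^sub>l| v\<close>.\<close>
lemma braket_tensor_density_nonneg:
  assumes v: "v \<in> carrier_vec (dS * dB)" and S: "density dS \<rho>S" and B: "density dB \<rho>B"
  defines "p \<equiv> braket v (tensor dS dB \<rho>S \<rho>B *\<^sub>v v)"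
  shows "p = complex_of_real (Re p) \<and> 0 \<le> Re p"
proof -
  obtain m :: nat and W where W: "\<forall>i<dS. \<forall>j<dS. \<rho>S $$ (i,j) = (\<Sum>l<m. W l i * cnj (W l j))"
    using psd_on_gram[OF density_psd_on[OF S]] by blast
  define y where "y l b = (\<Sum>a<dS. cnj (W l a) * v $ (a * dB + b))" for l b
  define Q where "Q l = qform dB (\<lambda>i j. \<rho>B $$ (i,j)) (y l)" for l
  have psdB: "psd_on dB (\<lambda>i j. \<rho>B $$ (i,j))" by (rule density_psd_on[OF B])
  have "p = (\<Sum>a<dS. \<Sum>b<dB. \<Sum>a'<dS. \<Sum>b'<dB. \<Sum>l<m.
      cnj (v $ (a * dB + b)) * W l a * cnj (W l a') * \<rho>B $$ (b,b') * v $ (a' * dB + b'))"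
    unfolding p_def braket_tensor[OF v]
    by (intro sum.cong refl) (simp add: W sum_distrib_left sum_distrib_right mult_ac)
  also have "\<dots> = (\<Sum>l<m. Q l)"
    unfolding Q_def qform_def y_def
    by (simp add: sum_distrib_left sum_distrib_right cnj_sum mult_ac
          sum.swap[of _ "{..<dS}" "{..<m}"] sum.swap[of _ "{..<dB}" "{..<m}"] sum.swap[of _ "{..<dS}" "{..<dB}"])
  finally have p: "p = (\<Sum>l<m. Q l)" .
  have Q: "Q l = complex_of_real (Re (Q l)) \<and> 0 \<le> Re (Q l)" for l
  proof -
    have "cnj (Q l) = Q l" unfolding Q_def by (rule qform_real) (use psdB in \<open>simp add: psd_on_def\<close>)
    then have "Im (Q l) = 0" by (metis Reals_cnj_iff complex_is_Real_iff)
    moreover have "0 \<le> Re (Q l)" using psdB unfolding psd_on_def Q_def by blast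
    ultimately show ?thesis by (simp add: complex_eq_iff)
  qed
  have "p = complex_of_real (\<Sum>l<m. Re (Q l))"
    unfolding p of_real_sum using Q by (intro sum.cong) auto
  moreover have "0 \<le> (\<Sum>l<m. Re (Q l))" using Q by (simp add: sum_nonneg)
  ultimately show ?thesis by simp
qed

lemma index_ptrace:
  "a < dS \<Longrightarrow> a' < dS \<Longrightarrow> ptrace_B dS dB R $$ (a,a') = (\<Sum>b<dB. R $$ (a * dB + b, a' * dB + b))"
  unfolding ptrace_B_def by simp

lemma ptrace_carrier: "ptrace_B dS dB R \<in> carrier_mat dS dS"
  unfolding ptrace_B_def by simp

lemma index_ptrace_sum_mats:
  assumes "a < dS" "a' < dS"
  shows "ptrace_B dS dB (sum_mats (dS * dB) f J) $$ (a,a') = (\<Sum>j\<in>J. ptrace_B dS dB (f j) $$ (a,a'))"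
  using assms by (simp add: index_ptrace index_sum_mats index_pair_less sum.swap[of _ J])

lemma index_ptrace_smult:
  assumes "R \<in> carrier_mat (dS * dB) (dS * dB)" "a < dS" "a' < dS"
  shows "ptrace_B dS dB (c \<cdot>\<^sub>m R) $$ (a,a') = c * ptrace_B dS dB R $$ (a,a')"
  using assms by (simp add: index_ptrace index_pair_less sum_distrib_left)

lemma norm_ptrace_ketbra_le_1:
  assumes v: "v \<in> carrier_vec (dS * dB)" and unit: "braket v v = 1" and a: "a < dS" "a' < dS"
  shows "cmod (ptrace_B dS dB (ketbra v) $$ (a,a')) \<le> 1"
proof -
  let ?r = "\<lambda>c. \<Sum>b<dB. (cmod (v $ (c * dB + b)))\<^sup>2"
  have "complex_of_real (\<Sum>i<dS * dB. (cmod (v $ i))\<^sup>2) = 1"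
    using unit v braket_self[of v] by simp
  then have total: "(\<Sum>c<dS. ?r c) = 1"
    unfolding of_real_eq_1_iff sum_lessThan_mult_index .
  have row: "?r c \<le> 1" if "c < dS" for c
    using member_le_sum[of c "{..<dS}" ?r] that total by (simp add: sum_nonneg)
  have "cmod (ptrace_B dS dB (ketbra v) $$ (a,a'))
      \<le> (\<Sum>b<dB. cmod (v $ (a * dB + b)) * cmod (v $ (a' * dB + b)))"
    using a v by (auto simp: index_ptrace index_ketbra index_pair_less norm_mult intro!: order_trans[OF norm_sum])
  also have "\<dots> \<le> (\<Sum>b<dB. ((cmod (v $ (a * dB + b)))\<^sup>2 + (cmod (v $ (a' * dB + b)))\<^sup>2) / 2)"
  proof (rule sum_mono)
    fix b
    show "cmod (v $ (a * dB + b)) * cmod (v $ (a' * dB + b))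
        \<le> ((cmod (v $ (a * dB + b)))\<^sup>2 + (cmod (v $ (a' * dB + b)))\<^sup>2) / 2"
      using sum_squares_bound[of "cmod (v $ (a * dB + b))" "cmod (v $ (a' * dB + b))"]
      by (simp add: field_simps)
  qed
  also have "\<dots> = (?r a + ?r a') / 2"
    by (simp add: sum_divide_distrib[symmetric] sum.distrib)
  also have "\<dots> \<le> 1" using row[OF a(1)] row[OF a(2)] by simp
  finally show ?thesis .
qed

section \<open>Estimating the local distance\<close>

lemma sum_le_sqrt_card_mult_sum_squares:
  fixes q :: "'a \<Rightarrow> real"
  shows "(\<Sum>j\<in>B. q j) \<le> sqrt (real (card B) * (\<Sum>j\<in>B. (q j)\<^sup>2))"
proof -
  have "(\<Sum>j\<in>B. q j) \<le> (\<Sum>j\<in>B. \<bar>q j\<bar> * \<bar>1\<bar>)" by (intro sum_mono) simp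
  also have "\<dots> \<le> L2_set q B * L2_set (\<lambda>j. 1) B" by (rule L2_set_mult_ineq)
  also have "\<dots> = sqrt (real (card B) * (\<Sum>j\<in>B. (q j)\<^sup>2))"
    unfolding L2_set_constant by (simp add: L2_set_def real_sqrt_mult mult.commute)
  finally show ?thesis .
qed

lemma weighted_sum_split_le:
  fixes q F :: "'a \<Rightarrow> real"
  assumes I: "finite I" and MI: "M \<subseteq> I" and BM: "B \<subseteq> M"
    and q_nonneg: "\<And>j. j \<in> I \<Longrightarrow> 0 \<le> q j" and q_sum: "sum q I = 1"
    and C: "0 \<le> C" and F_le: "\<And>j. j \<in> I \<Longrightarrow> F j \<le> C"
    and e: "0 \<le> e" and F_good: "\<And>j. j \<in> M - B \<Longrightarrow> F j \<le> e"
  shows "(\<Sum>j\<in>I. q j * F j) \<le> C * sum q (I - M) + e + C * sqrt (real (card B) * (\<Sum>j\<in>I. (q j)\<^sup>2))"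
proof -
  have M: "finite M" using I MI finite_subset by blast
  have qF_le: "q j * F j \<le> C * q j" if "j \<in> I" for j
    using mult_left_mono[OF F_le q_nonneg, OF that that] by (simp add: mult.commute)
  have "(\<Sum>j\<in>I. q j * F j) = (\<Sum>j\<in>I - M. q j * F j) + (\<Sum>j\<in>M. q j * F j)"
    by (rule sum.subset_diff[OF MI I])
  also have "(\<Sum>j\<in>M. q j * F j) = (\<Sum>j\<in>M - B. q j * F j) + (\<Sum>j\<in>B. q j * F j)"
    by (rule sum.subset_diff[OF BM M])
  finally have "(\<Sum>j\<in>I. q j * F j)
      = (\<Sum>j\<in>I - M. q j * F j) + (\<Sum>j\<in>M - B. q j * F j) + (\<Sum>j\<in>B. q j * F j)"
    by (simp add: add.assoc)
  moreover have "(\<Sum>j\<in>I - M. q j * F j) \<le> C * sum q (I - M)"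
    unfolding sum_distrib_left using qF_le by (intro sum_mono) auto
  moreover have "(\<Sum>j\<in>M - B. q j * F j) \<le> e"
  proof -
    have "(\<Sum>j\<in>M - B. q j * F j) \<le> (\<Sum>j\<in>M - B. q j * e)"
      using MI q_nonneg F_good by (intro sum_mono mult_left_mono) auto
    also have "\<dots> \<le> sum q I * e"
      unfolding sum_distrib_right[symmetric] using MI q_nonneg e I
      by (intro mult_right_mono sum_mono2) auto
    finally show ?thesis using q_sum by simp
  qed
  moreover have "(\<Sum>j\<in>B. q j * F j) \<le> C * sqrt (real (card B) * (\<Sum>j\<in>I. (q j)\<^sup>2))"
  proof -
    have "(\<Sum>j\<in>B. q j * F j) \<le> C * sum q B"
      unfolding sum_distrib_left using qF_le BM MI by (intro sum_mono) auto
    also have "\<dots> \<le> C * sqrt (real (card B) * (\<Sum>j\<in>B. (q j)\<^sup>2))"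
      using C by (intro mult_left_mono sum_le_sqrt_card_mult_sum_squares)
    also have "\<dots> \<le> C * sqrt (real (card B) * (\<Sum>j\<in>I. (q j)\<^sup>2))"
      using C BM MI I by (intro mult_left_mono real_sqrt_le_mono mult_left_mono sum_mono2) auto
    finally show ?thesis .
  qed
  ultimately show ?thesis by linarith
qed

lemma frob_norm_convex_comb_diff_le:
  fixes q :: "'a \<Rightarrow> real"
  assumes "finite J" "\<And>j. j \<in> J \<Longrightarrow> 0 \<le> q j" "sum q J = 1"
  shows "frob_norm d (\<lambda>i k. (\<Sum>j\<in>J. complex_of_real (q j) * f j i k) - g i k)
    \<le> (\<Sum>j\<in>J. q j * frob_norm d (\<lambda>i k. f j i k - g i k))"
proof -
  have diff_eq: "(\<Sum>j\<in>J. complex_of_real (q j) * f j i k) - g i k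
      = (\<Sum>j\<in>J. complex_of_real (q j) * (f j i k - g i k))" for i k
    using assms(3) by (simp add: right_diff_distrib sum_subtractf flip: sum_distrib_right of_real_sum)
  have "frob_norm d (\<lambda>i k. (\<Sum>j\<in>J. complex_of_real (q j) * f j i k) - g i k)
      \<le> (\<Sum>j\<in>J. cmod (complex_of_real (q j)) * frob_norm d (\<lambda>i k. f j i k - g i k))"
    unfolding diff_eq by (rule frob_norm_sum_le[OF assms(1)])
  also have "\<dots> = (\<Sum>j\<in>J. q j * frob_norm d (\<lambda>i k. f j i k - g i k))"
    using assms(2) by (intro sum.cong) auto
  finally show ?thesis .
qed

lemma frob_norm_ptrace_diff:
  "frob_norm dS (\<lambda>a a'. ptrace_B dS dB X $$ (a, a') - ptrace_B dS dB Y $$ (a, a'))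
    = frob_norm dS (\<lambda>a a'. (ptrace_B dS dB X - ptrace_B dS dB Y) $$ (a, a'))"
  using ptrace_carrier[of dS dB X] ptrace_carrier[of dS dB Y] by (intro frob_norm_cong) simp

lemma frob_norm_ptrace_diff_le_local_dist:
  "frob_norm dS (\<lambda>a a'. ptrace_B dS dB X $$ (a, a') - ptrace_B dS dB Y $$ (a, a'))
    \<le> 2 * local_dist dS dB X Y"
  unfolding frob_norm_ptrace_diff local_dist_def
  using trace_norm_frob_norm_bounds(1)[OF minus_carrier_mat[OF ptrace_carrier]] by simp

lemma local_dist_le_frob_norm:
  "local_dist dS dB X Y
    \<le> sqrt (real dS) / 2 * frob_norm dS (\<lambda>a a'. ptrace_B dS dB X $$ (a, a') - ptrace_B dS dB Y $$ (a, a'))"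
  unfolding frob_norm_ptrace_diff local_dist_def
  using trace_norm_frob_norm_bounds(2)[OF minus_carrier_mat[OF ptrace_carrier]] by simp

lemma index_ptrace_mixture:
  assumes "\<And>j. j \<in> J \<Longrightarrow> v j \<in> carrier_vec (dS * dB)" "a < dS" "a' < dS"
  shows "ptrace_B dS dB (sum_mats (dS * dB) (\<lambda>j. c j \<cdot>\<^sub>m ketbra (v j)) J) $$ (a, a')
    = (\<Sum>j\<in>J. c j * ptrace_B dS dB (ketbra (v j)) $$ (a, a'))"
  unfolding index_ptrace_sum_mats[OF assms(2,3)]
  by (rule sum.cong) (simp_all add: index_ptrace_smult[OF ketbra_carrier[OF assms(1)] assms(2,3)])

lemma norm_index_ptrace_average_le_1:
  fixes v :: "nat \<Rightarrow> complex vec"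
  assumes M: "finite M" "M \<noteq> {}"
    and vc: "\<And>j. j \<in> M \<Longrightarrow> v j \<in> carrier_vec (dS * dB)"
    and unit: "\<And>j. j \<in> M \<Longrightarrow> braket (v j) (v j) = 1" and a: "a < dS" "a' < dS"
  shows "cmod (ptrace_B dS dB ((1 / of_nat (card M)) \<cdot>\<^sub>m sum_mats (dS * dB) (\<lambda>j. ketbra (v j)) M) $$ (a, a')) \<le> 1"
proof -
  have "cmod (ptrace_B dS dB ((1 / of_nat (card M)) \<cdot>\<^sub>m sum_mats (dS * dB) (\<lambda>j. ketbra (v j)) M) $$ (a, a'))
      = cmod (\<Sum>j\<in>M. ptrace_B dS dB (ketbra (v j)) $$ (a, a')) / real (card M)"
    by (simp add: index_ptrace_smult[OF sum_mats_carrier a] index_ptrace_sum_mats[OF a] norm_divide)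
  also have "\<dots> \<le> (\<Sum>j\<in>M. cmod (ptrace_B dS dB (ketbra (v j)) $$ (a, a'))) / real (card M)"
    by (intro divide_right_mono norm_sum) simp
  also have "\<dots> \<le> (\<Sum>j\<in>M. 1) / real (card M)"
    using norm_ptrace_ketbra_le_1[OF vc unit a] by (intro divide_right_mono sum_mono) auto
  also have "\<dots> = 1" using M by simp
  finally show ?thesis .
qed

lemma frob_norm_ptrace_diff_average_le:
  fixes v :: "nat \<Rightarrow> complex vec"
  assumes "finite M" "M \<noteq> {}"
    and vc: "\<And>j. j \<in> M \<Longrightarrow> v j \<in> carrier_vec (dS * dB)"
    and unit: "\<And>j. j \<in> M \<Longrightarrow> braket (v j) (v j) = 1"
    and w: "w \<in> carrier_vec (dS * dB)" "braket w w = 1"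
  shows "frob_norm dS (\<lambda>a a'. ptrace_B dS dB (ketbra w) $$ (a, a')
    - ptrace_B dS dB ((1 / of_nat (card M)) \<cdot>\<^sub>m sum_mats (dS * dB) (\<lambda>j. ketbra (v j)) M) $$ (a, a'))
    \<le> real (dS * dS) * 2"
proof (rule frob_norm_le_const)
  fix a a' assume a: "a < dS" "a' < dS"
  let ?x = "ptrace_B dS dB (ketbra w) $$ (a, a')"
  let ?y = "ptrace_B dS dB ((1 / of_nat (card M)) \<cdot>\<^sub>m sum_mats (dS * dB) (\<lambda>j. ketbra (v j)) M) $$ (a, a')"
  show "cmod (?x - ?y) \<le> 2"
    using norm_triangle_ineq4[of ?x ?y] norm_ptrace_ketbra_le_1[OF w a]
      norm_index_ptrace_average_le_1[where v = v and M = M, OF assms(1-4) a] by linarith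
qed

lemma sum_braket_tensor_density:
  fixes v :: "nat \<Rightarrow> complex vec"
  assumes vc: "\<And>j. j < dS * dB \<Longrightarrow> v j \<in> carrier_vec (dS * dB)"
    and on: "\<And>j k. j < dS * dB \<Longrightarrow> k < dS * dB \<Longrightarrow> braket (v j) (v k) = (if j = k then 1 else 0)"
    and S: "density dS \<rho>S" and B: "density dB \<rho>B"
  shows "(\<Sum>j<dS * dB. braket (v j) (tensor dS dB \<rho>S \<rho>B *\<^sub>v v j)) = 1"
  using sum_braket_orthonormal_eq_mtrace[OF vc on tensor_carrier] S B
  by (simp add: mtrace_tensor density_carrier density_def)

lemma local_dist_diagonal_ensemble_le:
  fixes v :: "nat \<Rightarrow> complex vec" and M :: "nat set" and \<epsilon> :: real
  assumes vc: "\<And>j. j < dS * dB \<Longrightarrow> v j \<in> carrier_vec (dS * dB)"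
    and on: "\<And>j k. j < dS * dB \<Longrightarrow> k < dS * dB \<Longrightarrow> braket (v j) (v k) = (if j = k then 1 else 0)"
    and S: "density dS \<rho>S" and B: "density dB \<rho>B"
    and M: "M \<subseteq> {..<dS * dB}" "M \<noteq> {}" and \<epsilon>: "0 \<le> \<epsilon>"
  defines "\<rho>0 \<equiv> tensor dS dB \<rho>S \<rho>B"
    and "\<rho>mc \<equiv> (1 / of_nat (card M)) \<cdot>\<^sub>m sum_mats (dS * dB) (\<lambda>j. ketbra (v j)) M"
    and "\<omega> \<equiv> sum_mats (dS * dB) (\<lambda>j. braket (v j) (tensor dS dB \<rho>S \<rho>B *\<^sub>v v j) \<cdot>\<^sub>m ketbra (v j))
      {..<dS * dB}"
    and "Pout \<equiv> sum_mats (dS * dB) (\<lambda>j. ketbra (v j)) ({..<dS * dB} - M)"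
    and "bad \<equiv> {j \<in> M. local_dist dS dB (ketbra (v j))
      ((1 / of_nat (card M)) \<cdot>\<^sub>m sum_mats (dS * dB) (\<lambda>j. ketbra (v j)) M) > \<epsilon>}"
  shows "local_dist dS dB \<omega> \<rho>mc \<le> sqrt (real dS) * (real (dS * dS) * Re (mtrace (Pout * \<rho>0)) + \<epsilon>
    + real (dS * dS) * sqrt (real (card bad) * (\<Sum>j<dS * dB. (Re (braket (v j) (\<rho>0 *\<^sub>v v j)))\<^sup>2)))"
proof -
  define n where "n = dS * dB"
  define q where "q j = Re (braket (v j) (\<rho>0 *\<^sub>v v j))" for j
  define \<sigma> where "\<sigma> j a a' = ptrace_B dS dB (ketbra (v j)) $$ (a, a')" for j a a'
  define R where "R a a' = ptrace_B dS dB \<rho>mc $$ (a, a')" for a a'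
  define F where "F j = frob_norm dS (\<lambda>a a'. \<sigma> j a a' - R a a')" for j
  have p_real: "braket (v j) (\<rho>0 *\<^sub>v v j) = complex_of_real (q j)" and q_nonneg: "0 \<le> q j"
    if "j < n" for j
    using braket_tensor_density_nonneg[OF vc S B, of j] that unfolding q_def \<rho>0_def n_def by auto
  have q_sum: "(\<Sum>j<n. q j) = 1"
    using sum_braket_tensor_density[OF vc on S B] p_real
    unfolding \<rho>0_def[symmetric] n_def[symmetric] by (simp flip: of_real_sum)
  have F_le: "F j \<le> real (dS * dS) * 2" if "j < n" for j
    unfolding F_def \<sigma>_def R_def \<rho>mc_def using that M vc on finite_subset[OF M(1)] unfolding n_def
    by (intro frob_norm_ptrace_diff_average_le) auto
  have F_good: "F j \<le> 2 * \<epsilon>" if "j \<in> M - bad" for j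
    using frob_norm_ptrace_diff_le_local_dist[of dS dB "ketbra (v j)" \<rho>mc] that
    unfolding F_def \<sigma>_def R_def bad_def \<rho>mc_def by auto
  have \<omega>_entry: "ptrace_B dS dB \<omega> $$ (a, a') = (\<Sum>j<n. complex_of_real (q j) * \<sigma> j a a')"
    if "a < dS" "a' < dS" for a a'
  proof -
    have "ptrace_B dS dB \<omega> $$ (a, a') = (\<Sum>j<n. braket (v j) (\<rho>0 *\<^sub>v v j) * \<sigma> j a a')"
      unfolding \<omega>_def \<rho>0_def[symmetric] \<sigma>_def n_def
      by (rule index_ptrace_mixture) (use vc that in auto)
    also have "\<dots> = (\<Sum>j<n. complex_of_real (q j) * \<sigma> j a a')"
      using p_real by (intro sum.cong) auto
    finally show ?thesis .
  qed
  have "frob_norm dS (\<lambda>a a'. ptrace_B dS dB \<omega> $$ (a, a') - ptrace_B dS dB \<rho>mc $$ (a, a'))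
      = frob_norm dS (\<lambda>a a'. (\<Sum>j<n. complex_of_real (q j) * \<sigma> j a a') - R a a')"
    by (rule frob_norm_cong) (simp add: \<omega>_entry R_def)
  then have "local_dist dS dB \<omega> \<rho>mc
      \<le> sqrt (real dS) / 2 * frob_norm dS (\<lambda>a a'. (\<Sum>j<n. complex_of_real (q j) * \<sigma> j a a') - R a a')"
    using local_dist_le_frob_norm[of dS dB \<omega> \<rho>mc] by simp
  also have "\<dots> \<le> sqrt (real dS) / 2 * (\<Sum>j<n. q j * F j)"
    unfolding F_def using q_nonneg q_sum by (intro mult_left_mono frob_norm_convex_comb_diff_le) auto
  also have "\<dots> \<le> sqrt (real dS) / 2 * (real (dS * dS) * 2 * sum q ({..<n} - M) + 2 * \<epsilon>
      + real (dS * dS) * 2 * sqrt (real (card bad) * (\<Sum>j<n. (q j)\<^sup>2)))"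
    using M(1) q_nonneg q_sum F_le F_good \<epsilon> unfolding n_def bad_def
    by (intro mult_left_mono weighted_sum_split_le) auto
  also have "sum q ({..<n} - M) = Re (mtrace (Pout * \<rho>0))"
    using mtrace_sum_ketbra_mult[OF _ tensor_carrier, of "{..<n} - M" v dS dB \<rho>S \<rho>B] vc p_real
    unfolding Pout_def \<rho>0_def[symmetric] n_def by (simp add: Re_sum)
  finally show ?thesis unfolding q_def n_def by (simp add: algebra_simps)
qed

lemma ratio_bounds_imp_mult_less_sq:
  fixes b D E S t :: real
  assumes "b / D < E" "0 < D" "D * E / t\<^sup>2 < 1 / S" "0 < t" "0 \<le> b"
  shows "b * S < t\<^sup>2" "0 \<le> b * S"
proof -
  have "b < D * E" using assms(1,2) by (simp add: divide_less_eq mult.commute)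
  then have "0 < D * E / t\<^sup>2" using assms(4,5) by simp
  then have "0 < 1 / S" using assms(3) by linarith
  then have S: "0 < S" by simp
  then have "D * E * S < t\<^sup>2" using assms(3,4) by (simp add: field_simps)
  then show "b * S < t\<^sup>2" using mult_strict_right_mono[OF \<open>b < D * E\<close> S] by linarith
  show "0 \<le> b * S" using S assms(5) by simp
qed

lemma three_term_bound_lt:
  fixes s c T x t :: real
  assumes "0 \<le> s" "0 \<le> c" "T < t" "0 \<le> x" "x < t\<^sup>2" "0 < t"
  shows "s * (c * T + t + c * sqrt x) < (s * (2 * c + 1) + 1) * t"
proof -
  have "sqrt x < sqrt (t\<^sup>2)" using assms(5) by (rule real_sqrt_less_mono)
  then have "sqrt x < t" using assms(6) by simp
  then have "c * T + t + c * sqrt x \<le> (2 * c + 1) * t"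
    using mult_left_mono[of T t c] mult_left_mono[of "sqrt x" t c] assms by (simp add: algebra_simps)
  then have "s * (c * T + t + c * sqrt x) \<le> s * ((2 * c + 1) * t)" using assms(1) by (rule mult_left_mono)
  then show ?thesis using assms(6) by (simp add: algebra_simps)
qed

theorem lemma2:
  fixes dS :: nat and dB :: "nat \<Rightarrow> nat"
    and H :: "nat \<Rightarrow> complex mat"
    and E :: "nat \<Rightarrow> nat \<Rightarrow> real" and v :: "nat \<Rightarrow> nat \<Rightarrow> complex vec"
    and \<rho>S \<rho>B :: "nat \<Rightarrow> complex mat"
    and u \<alpha> :: real and \<Delta> :: "nat \<Rightarrow> real"
    and M :: "nat \<Rightarrow> nat set" and Dmc :: "nat \<Rightarrow> nat"
    and \<rho>mc \<rho>0 \<omega> Pout :: "nat \<Rightarrow> complex mat" and Deff :: "nat \<Rightarrow> real"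
  defines "M \<equiv> \<lambda>N. {j. j < dS * dB N \<and> \<bar>E N j - u * real N\<bar> \<le> \<Delta> N}"
    and "Dmc \<equiv> \<lambda>N. card (M N)"
    and "\<rho>mc \<equiv> \<lambda>N. (1 / of_nat (Dmc N)) \<cdot>\<^sub>m
            sum_mats (dS * dB N) (\<lambda> j. ketbra (v N j)) (M N)"
    and "\<rho>0 \<equiv> \<lambda>N. tensor dS (dB N) (\<rho>S N) (\<rho>B N)"
    and "\<omega> \<equiv> \<lambda>N. sum_mats (dS * dB N) (\<lambda>j. braket (v N j) (\<rho>0 N *\<^sub>v v N j) \<cdot>\<^sub>m ketbra (v N j)) {..<dS * dB N}"
    and "Pout \<equiv> \<lambda>N. sum_mats (dS * dB N) (\<lambda>j. ketbra (v N j)) ({..<dS * dB N} - M N)"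
    and "Deff \<equiv> \<lambda>N. 1 / (\<Sum>j<dS * dB N. (Re (braket (v N j) (\<rho>0 N *\<^sub>v v N j)))\<^sup>2)"
  assumes H_carrier: "\<And>N. H N \<in> carrier_mat (dS * dB N) (dS * dB N)"
    and H_herm: "\<And>N. cadj (H N) = H N"
    and eig_vec: "\<And>N j. j < dS * dB N \<Longrightarrow> v N j \<in> carrier_vec (dS * dB N)"
    and eig: "\<And>N j. j < dS * dB N \<Longrightarrow> H N *\<^sub>v v N j = complex_of_real (E N j) \<cdot>\<^sub>v v N j"
    and orthonormal: "\<And>N j k. j < dS * dB N \<Longrightarrow> k < dS * dB N \<Longrightarrow>
                        braket (v N j) (v N k) = (if j = k then 1 else 0)"
    and nondeg: "\<And>N. inj_on (E N) {..<dS * dB N}"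
    and rhoS: "\<And>N. density dS (\<rho>S N)"
    and rhoB: "\<And>N. density (dB N) (\<rho>B N)"
    and Delta_pos: "\<And>N. \<Delta> N > 0"
    and alpha: "0 \<le> \<alpha>" "\<alpha> < 1"
    and Delta_O: "\<Delta> \<in> O(\<lambda>N. real N powr \<alpha>)"
    and M_ne: "\<And>N. M N \<noteq> {}"
    and cond_i: "\<And>\<epsilon>. \<epsilon> > 0 \<Longrightarrow> eventually (\<lambda>N. Re (mtrace (Pout N * \<rho>0 N)) < \<epsilon>) sequentially"
    and cond_ii_iii: "\<exists>\<gamma> :: real \<Rightarrow> real. \<forall>\<epsilon>>0. \<gamma> \<epsilon> > 0 \<and>
        (\<forall>N. real (card {j \<in> M N. local_dist dS (dB N) (ketbra (v N j)) (\<rho>mc N) > \<epsilon>}) / real (Dmc N)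
               < exp (- \<gamma> \<epsilon> * real N)) \<and>
        (\<forall>\<epsilon>'>0. eventually (\<lambda>N. Deff N > real (Dmc N) * exp (- \<gamma> \<epsilon> * real N) / \<epsilon>') sequentially)"
  shows "\<forall>\<epsilon>>0. eventually (\<lambda>N. local_dist dS (dB N) (\<omega> N) (\<rho>mc N) < \<epsilon>) sequentially"
proof (intro allI impI)
  fix \<eta> :: real
  assume "0 < \<eta>"
  define K where "K = sqrt (real dS) * (2 * real (dS * dS) + 1) + 1"
  define t where "t = \<eta> / K"
  have "0 < K" unfolding K_def by (simp add: add_nonneg_pos)
  then have t: "0 < t" "K * t = \<eta>" unfolding t_def using \<open>0 < \<eta>\<close> by auto
  then have "0 < t\<^sup>2" by simp
  then obtain g where ii: "\<And>N. real (card {j \<in> M N. local_dist dS (dB N) (ketbra (v N j)) (\<rho>mc N) > t})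
        / real (Dmc N) < exp (- g * real N)"
    and iii: "\<forall>\<^sub>F N in sequentially. Deff N > real (Dmc N) * exp (- g * real N) / t\<^sup>2"
    using cond_ii_iii t(1) by blast
  from cond_i[OF t(1)] iii
  show "\<forall>\<^sub>F N in sequentially. local_dist dS (dB N) (\<omega> N) (\<rho>mc N) < \<eta>"
  proof eventually_elim
    case (elim N)
    define b where "b = real (card {j \<in> M N. local_dist dS (dB N) (ketbra (v N j)) (\<rho>mc N) > t})"
    define S where "S = (\<Sum>j<dS * dB N. (Re (braket (v N j) (\<rho>0 N *\<^sub>v v N j)))\<^sup>2)"
    have M_sub: "M N \<subseteq> {..<dS * dB N}" unfolding M_def by auto
    then have "0 < real (Dmc N)"
      using M_ne[of N] finite_subset[OF M_sub] unfolding Dmc_def by (simp add: card_gt_0_iff)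
    with ii[of N, folded b_def] elim(2)[unfolded Deff_def, folded S_def] t(1)
    have bS: "b * S < t\<^sup>2" "0 \<le> b * S"
      by (intro ratio_bounds_imp_mult_less_sq; simp add: b_def)+
    have "local_dist dS (dB N) (\<omega> N) (\<rho>mc N) \<le> sqrt (real dS) *
        (real (dS * dS) * Re (mtrace (Pout N * \<rho>0 N)) + t + real (dS * dS) * sqrt (b * S))"
      unfolding b_def S_def \<omega>_def \<rho>mc_def Dmc_def \<rho>0_def Pout_def
      by (rule local_dist_diagonal_ensemble_le[OF eig_vec orthonormal rhoS rhoB M_sub M_ne less_imp_le[OF t(1)]])
    also have "\<dots> < K * t"
      unfolding K_def by (rule three_term_bound_lt) (use elim(1) bS t(1) in auto)
    finally show ?case using t(2) by simp
  qed
qed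

end
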